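(* A regular Hausdorff space $X$ is a Nagata space if and only if $\mathcal{F}(X)$ is a Nagata space.
   Context: $\mathcal{F}(X)$ is the set of nonempty finite subsets of $X$ with the Vietoris topology (base: $\langle U_1,\dots,U_k\rangle=\{A: A\subset\bigcup_i U_i,\ A\cap U_j\neq\emptyset\ \forall j\}$, $U_i$ open in $X$). A space $Y$ is a Nagata space if for each $x\in Y$ there are sequences $\{U_n(x)\}_{n\in\mathbb{N}}$ and $\{V_n(x)\}_{n\in\mathbb{N}}$ of open neighborhoods of $x$ such that (i) $\{U_n(x)\}$ is a local base at $x$ with $U_{n+1}(x)\subset U_n(x)$, and (ii) if $y\notin U_n(x)$ then $V_n(x)\cap V_n(y)=\emptyset$. *)

theory Defs
  imports "HOL-Analysis.Analysis"
begin

definition vietoris_fin_base :: "'a topology \<Rightarrow> 'a set set set" where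
  "vietoris_fin_base X =
     {{A. A \<noteq> {} \<and> finite A \<and> A \<subseteq> \<Union>\<U> \<and> (\<forall>U\<in>\<U>. A \<inter> U \<noteq> {})} | \<U>.
        finite \<U> \<and> \<U> \<noteq> {} \<and> (\<forall>U\<in>\<U>. openin X U)}"

definition fin_vietoris :: "'a topology \<Rightarrow> 'a set topology" where
  "fin_vietoris X = topology_generated_by (vietoris_fin_base X)"

definition nagata_space :: "'a topology \<Rightarrow> bool" where
  "nagata_space Y \<longleftrightarrow>
     (\<exists>U V :: 'a \<Rightarrow> nat \<Rightarrow> 'a set. \<forall>x\<in>topspace Y.
        (\<forall>n. openin Y (U x n) \<and> x \<in> U x n \<and> openin Y (V x n) \<and> x \<in> V x n) \<and>
        (\<forall>n. U x (Suc n) \<subseteq> U x n) \<and>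
        (\<forall>W. openin Y W \<and> x \<in> W \<longrightarrow> (\<exists>n. U x n \<subseteq> W)) \<and>
        (\<forall>n. \<forall>y\<in>topspace Y. y \<notin> U x n \<longrightarrow> V x n \<inter> V y n = {}))"

end

theory Submission
  imports Defs
begin

text \<open>Given Nagata neighbourhoods \<open>U\<^sub>n(x)\<close>, \<open>V\<^sub>n(x)\<close> in \<open>X\<close>, take the Vietoris boxes
  \<open>\<langle>U\<^sub>n(a) : a \<in> A\<rangle>\<close> and \<open>\<langle>V\<^sub>n(a) : a \<in> A\<rangle>\<close> at a finite set \<open>A\<close>. They form a local base at
  \<open>A\<close>, because a basic Vietoris neighbourhood of \<open>A\<close> is controlled by finitely many pairs
  \<open>a \<in> U\<close>. If \<open>B \<notin> \<langle>U\<^sub>n(a) : a \<in> A\<rangle>\<close>, then either some \<open>b \<in> B\<close> lies outside every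
  \<open>U\<^sub>n(a)\<close> or some \<open>U\<^sub>n(a)\<close> misses \<open>B\<close>; in both cases the separation property in \<open>X\<close> makes
  the two \<open>V\<close>-boxes disjoint. Conversely, \<open>x \<mapsto> {x}\<close> is continuous from \<open>X\<close> into \<open>F(X)\<close>,
  so Nagata neighbourhoods of singletons pull back to \<open>X\<close>; the box \<open>\<langle>W\<rangle>\<close> shows that the
  pulled-back neighbourhoods still form a local base.\<close>

definition fin_box :: "'a set set \<Rightarrow> 'a set set" where
  "fin_box \<U> = {A. A \<noteq> {} \<and> finite A \<and> A \<subseteq> \<Union>\<U> \<and> (\<forall>U\<in>\<U>. A \<inter> U \<noteq> {})}"

lemma vietoris_fin_base_eq:
  "vietoris_fin_base X = {fin_box \<U> | \<U>. finite \<U> \<and> \<U> \<noteq> {} \<and> (\<forall>U\<in>\<U>. openin X U)}"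
  unfolding vietoris_fin_base_def fin_box_def ..

lemma topspace_fin_vietoris:
  "topspace (fin_vietoris X) = {A. A \<noteq> {} \<and> finite A \<and> A \<subseteq> topspace X}"
proof -
  have "fin_box \<U> \<subseteq> {A. A \<noteq> {} \<and> finite A \<and> A \<subseteq> topspace X}" if "\<forall>U\<in>\<U>. openin X U" for \<U>
    using that openin_subset unfolding fin_box_def by blast
  moreover have "{A. A \<noteq> {} \<and> finite A \<and> A \<subseteq> topspace X} = fin_box {topspace X}"
    unfolding fin_box_def by auto
  ultimately show ?thesis
    unfolding fin_vietoris_def topology_generated_by_topspace vietoris_fin_base_eq
    by auto
qed

lemma openin_fin_vietoris_fin_box:
  assumes "finite \<U>" "\<U> \<noteq> {}" "\<And>U. U \<in> \<U> \<Longrightarrow> openin X U"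
  shows "openin (fin_vietoris X) (fin_box \<U>)"
  unfolding fin_vietoris_def
  by (rule topology_generated_by_Basis) (use assms in \<open>auto simp: vietoris_fin_base_eq\<close>)

lemma mem_fin_box_image:
  "B \<in> fin_box (f ` A) \<longleftrightarrow>
     B \<noteq> {} \<and> finite B \<and> (\<forall>b\<in>B. \<exists>a\<in>A. b \<in> f a) \<and> (\<forall>a\<in>A. \<exists>b\<in>B. b \<in> f a)"
  unfolding fin_box_def by blast

lemma fin_box_image_mono:
  "(\<And>a. a \<in> A \<Longrightarrow> f a \<subseteq> g a) \<Longrightarrow> fin_box (f ` A) \<subseteq> fin_box (g ` A)"
  unfolding subset_iff mem_fin_box_image by blast

lemma self_mem_fin_box_image:
  "A \<noteq> {} \<Longrightarrow> finite A \<Longrightarrow> (\<And>a. a \<in> A \<Longrightarrow> a \<in> f a) \<Longrightarrow> A \<in> fin_box (f ` A)"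
  unfolding mem_fin_box_image by blast

lemma fin_box_image_disjoint:
  assumes "B \<noteq> {}" "finite B" "B \<notin> fin_box (U ` A)"
    and sep: "\<And>a b. a \<in> A \<Longrightarrow> b \<in> B \<Longrightarrow> b \<notin> U a \<Longrightarrow> V a \<inter> V b = {}"
  shows "fin_box (V ` A) \<inter> fin_box (V ` B) = {}"
proof -
  from assms(1-3) consider b where "b \<in> B" "\<forall>a\<in>A. b \<notin> U a" | a where "a \<in> A" "\<forall>b\<in>B. b \<notin> U a"
    unfolding mem_fin_box_image by blast
  then show ?thesis
  proof cases
    case 1
    show ?thesis
    proof (rule equals0I)
      fix C assume "C \<in> fin_box (V ` A) \<inter> fin_box (V ` B)"
      then have "C \<in> fin_box (V ` A)" "C \<in> fin_box (V ` B)" by auto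
      then obtain a c where "a \<in> A" "c \<in> V a" "c \<in> V b"
        using 1 unfolding mem_fin_box_image by meson
      then show False using sep 1 by blast
    qed
  next
    case 2
    show ?thesis
    proof (rule equals0I)
      fix C assume "C \<in> fin_box (V ` A) \<inter> fin_box (V ` B)"
      then have "C \<in> fin_box (V ` A)" "C \<in> fin_box (V ` B)" by auto
      then obtain b c where "b \<in> B" "c \<in> V a" "c \<in> V b"
        using 2 unfolding mem_fin_box_image by meson
      then show False using sep 2 by blast
    qed
  qed
qed

lemma continuous_map_singleton_fin_vietoris:
  "continuous_map X (fin_vietoris X) (\<lambda>x. {x})"
  unfolding fin_vietoris_def
proof (rule continuous_on_generated_topo)
  fix S assume "S \<in> vietoris_fin_base X"
  then obtain \<U> where \<U>: "finite \<U>" "\<U> \<noteq> {}" "\<forall>U\<in>\<U>. openin X U" and S: "S = fin_box \<U>"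
    unfolding vietoris_fin_base_eq by blast
  have "(\<lambda>x. {x}) -` S \<inter> topspace X = topspace X \<inter> \<Inter>\<U>"
    using \<U>(2) unfolding S fin_box_def by auto
  moreover have "openin X (topspace X \<inter> \<Inter>\<U>)"
    using \<U> by (intro openin_Int openin_Inter) auto
  ultimately show "openin X ((\<lambda>x. {x}) -` S \<inter> topspace X)"
    by simp
next
  show "(\<lambda>x. {x}) ` topspace X \<subseteq> \<Union>(vietoris_fin_base X)"
    using topspace_fin_vietoris[of X] unfolding fin_vietoris_def topology_generated_by_topspace
    by auto
qed

lemma fin_box_image_subset_fin_box:
  assumes A: "A \<subseteq> \<Union>\<U>" "\<forall>V\<in>\<U>. A \<inter> V \<noteq> {}"
    and small: "\<And>a V. a \<in> A \<Longrightarrow> V \<in> \<U> \<Longrightarrow> a \<in> V \<Longrightarrow> f a \<subseteq> V"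
  shows "fin_box (f ` A) \<subseteq> fin_box \<U>"
proof
  fix B assume "B \<in> fin_box (f ` A)"
  then have B: "B \<noteq> {}" "finite B" "\<forall>b\<in>B. \<exists>a\<in>A. b \<in> f a" "\<forall>a\<in>A. \<exists>b\<in>B. b \<in> f a"
    by (simp_all add: mem_fin_box_image)
  have "B \<subseteq> \<Union>\<U>"
  proof
    fix b assume "b \<in> B"
    then obtain a where "a \<in> A" "b \<in> f a" using B(3) by blast
    moreover obtain V where "V \<in> \<U>" "a \<in> V" using \<open>a \<in> A\<close> A(1) by blast
    ultimately show "b \<in> \<Union>\<U>" using small by blast
  qed
  moreover have "B \<inter> V \<noteq> {}" if V: "V \<in> \<U>" for V
  proof -
    obtain a where a: "a \<in> A" "a \<in> V" using A(2) V by blast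
    then obtain b where "b \<in> B" "b \<in> f a" using B(4) by blast
    then show ?thesis using small a V by blast
  qed
  ultimately show "B \<in> fin_box \<U>" unfolding fin_box_def using B(1,2) by blast
qed

lemma eventually_subset_of_decreasing:
  assumes "\<And>n. S (Suc n) \<subseteq> S n" and "S m \<subseteq> G"
  shows "\<forall>\<^sub>F n in sequentially. S n \<subseteq> G"
  unfolding eventually_sequentially
  using lift_Suc_antimono_le[of S, OF assms(1)] assms(2) by blast

locale decreasing_local_base =
  fixes X :: "'a topology" and U :: "'a \<Rightarrow> nat \<Rightarrow> 'a set"
  assumes U_Suc_subset: "x \<in> topspace X \<Longrightarrow> U x (Suc n) \<subseteq> U x n"
    and U_local_base: "x \<in> topspace X \<Longrightarrow> openin X W \<Longrightarrow> x \<in> W \<Longrightarrow> \<exists>n. U x n \<subseteq> W"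

lemma (in decreasing_local_base) eventually_fin_box_image_subset_fin_box:
  assumes \<U>: "finite \<U>" "\<forall>V\<in>\<U>. openin X V" and A: "A \<in> fin_box \<U>"
  shows "\<forall>\<^sub>F n in sequentially. fin_box ((\<lambda>a. U a n) ` A) \<subseteq> fin_box \<U>"
proof -
  have "\<forall>\<^sub>F n in sequentially. a \<in> V \<longrightarrow> U a n \<subseteq> V" if "a \<in> A" "V \<in> \<U>" for a V
  proof (cases "a \<in> V")
    case True
    have "openin X V" using \<U>(2) \<open>V \<in> \<U>\<close> by blast
    moreover from this have "a \<in> topspace X" using True by (auto dest: openin_subset)
    ultimately obtain m where "U a m \<subseteq> V" using U_local_base True by blast
    with U_Suc_subset[OF \<open>a \<in> topspace X\<close>] show ?thesis
      by (auto elim: eventually_mono intro: eventually_subset_of_decreasing)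
  qed simp
  moreover have "finite A" using A by (simp add: fin_box_def)
  ultimately have "\<forall>\<^sub>F n in sequentially. \<forall>a\<in>A. \<forall>V\<in>\<U>. a \<in> V \<longrightarrow> U a n \<subseteq> V"
    using \<U>(1) by (simp add: eventually_ball_finite)
  then show ?thesis
  proof (rule eventually_mono)
    fix n assume "\<forall>a\<in>A. \<forall>V\<in>\<U>. a \<in> V \<longrightarrow> U a n \<subseteq> V"
    moreover have "A \<subseteq> \<Union>\<U>" "\<forall>V\<in>\<U>. A \<inter> V \<noteq> {}" using A by (auto simp: fin_box_def)
    ultimately show "fin_box ((\<lambda>a. U a n) ` A) \<subseteq> fin_box \<U>"
      by (intro fin_box_image_subset_fin_box) auto
  qed
qed

text \<open>Phrased with \<open>eventually\<close> so that, in the induction over generated open sets, the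
  intersection case is just a conjunction of two eventualities.\<close>

lemma (in decreasing_local_base) eventually_fin_box_image_subset:
  assumes W: "openin (fin_vietoris X) W" and "A \<in> W"
  shows "\<forall>\<^sub>F n in sequentially. fin_box ((\<lambda>a. U a n) ` A) \<subseteq> W"
proof -
  have "generate_topology_on (vietoris_fin_base X) W"
    using W unfolding fin_vietoris_def by (rule openin_topology_generated_by)
  then show ?thesis
    using \<open>A \<in> W\<close>
  proof (induction arbitrary: A rule: generate_topology_on.induct)
    case Empty
    then show ?case by simp
  next
    case (Int S T)
    then have "\<forall>\<^sub>F n in sequentially. fin_box ((\<lambda>a. U a n) ` A) \<subseteq> S"
      and "\<forall>\<^sub>F n in sequentially. fin_box ((\<lambda>a. U a n) ` A) \<subseteq> T"
      by auto
    then show ?case by (simp add: eventually_conj_iff)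
  next
    case (UN K)
    then obtain S where "S \<in> K" "A \<in> S" by blast
    then have "\<forall>\<^sub>F n in sequentially. fin_box ((\<lambda>a. U a n) ` A) \<subseteq> S"
      using UN.IH by blast
    then show ?case by (rule eventually_mono) (use \<open>S \<in> K\<close> in blast)
  next
    case (Basis S)
    then obtain \<U> where \<U>: "finite \<U>" "\<forall>V\<in>\<U>. openin X V" and S: "S = fin_box \<U>"
      unfolding vietoris_fin_base_eq by blast
    from Basis.prems have "A \<in> fin_box \<U>" unfolding S .
    then show ?case
      unfolding S by (rule eventually_fin_box_image_subset_fin_box[OF \<U>])
  qed
qed

locale nagata_system = decreasing_local_base Y U
  for Y :: "'a topology" and U :: "'a \<Rightarrow> nat \<Rightarrow> 'a set" +
  fixes V :: "'a \<Rightarrow> nat \<Rightarrow> 'a set"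
  assumes open_U: "x \<in> topspace Y \<Longrightarrow> openin Y (U x n) \<and> x \<in> U x n"
    and open_V: "x \<in> topspace Y \<Longrightarrow> openin Y (V x n) \<and> x \<in> V x n"
    and V_disjoint: "x \<in> topspace Y \<Longrightarrow> y \<in> topspace Y \<Longrightarrow> y \<notin> U x n \<Longrightarrow> V x n \<inter> V y n = {}"

lemma nagata_space_iff_nagata_system: "nagata_space Y \<longleftrightarrow> (\<exists>U V. nagata_system Y U V)"
  unfolding nagata_space_def nagata_system_def nagata_system_axioms_def decreasing_local_base_def
  by (intro ex_cong1) fast

lemma (in nagata_system) nagata_system_fin_vietoris:
  "nagata_system (fin_vietoris Y) (\<lambda>A n. fin_box ((\<lambda>a. U a n) ` A)) (\<lambda>A n. fin_box ((\<lambda>a. V a n) ` A))"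
proof unfold_locales
  fix A n assume "A \<in> topspace (fin_vietoris Y)"
  then have A: "A \<noteq> {}" "finite A" "A \<subseteq> topspace Y" by (auto simp: topspace_fin_vietoris)
  show "openin (fin_vietoris Y) (fin_box ((\<lambda>a. U a n) ` A)) \<and> A \<in> fin_box ((\<lambda>a. U a n) ` A)"
    by (intro conjI openin_fin_vietoris_fin_box self_mem_fin_box_image) (use A open_U in auto)
  show "openin (fin_vietoris Y) (fin_box ((\<lambda>a. V a n) ` A)) \<and> A \<in> fin_box ((\<lambda>a. V a n) ` A)"
    by (intro conjI openin_fin_vietoris_fin_box self_mem_fin_box_image) (use A open_V in auto)
  show "fin_box ((\<lambda>a. U a (Suc n)) ` A) \<subseteq> fin_box ((\<lambda>a. U a n) ` A)"
    by (intro fin_box_image_mono) (use A U_Suc_subset in auto)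
next
  fix A W assume W: "openin (fin_vietoris Y) W" "A \<in> W"
  have "\<forall>\<^sub>F n in sequentially. fin_box ((\<lambda>a. U a n) ` A) \<subseteq> W"
    by (rule eventually_fin_box_image_subset[OF W])
  then show "\<exists>n. fin_box ((\<lambda>a. U a n) ` A) \<subseteq> W"
    by (rule eventually_happens'[OF trivial_limit_sequentially])
next
  fix A B n assume "A \<in> topspace (fin_vietoris Y)" "B \<in> topspace (fin_vietoris Y)"
    and B_notin: "B \<notin> fin_box ((\<lambda>a. U a n) ` A)"
  then have A: "A \<subseteq> topspace Y" and B: "B \<noteq> {}" "finite B" "B \<subseteq> topspace Y"
    by (auto simp: topspace_fin_vietoris)
  show "fin_box ((\<lambda>a. V a n) ` A) \<inter> fin_box ((\<lambda>a. V a n) ` B) = {}"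
  proof (rule fin_box_image_disjoint[OF B(1,2) B_notin])
    fix a b assume "a \<in> A" "b \<in> B" "b \<notin> U a n"
    then show "V a n \<inter> V b n = {}" using V_disjoint A B(3) by blast
  qed
qed

lemma nagata_system_singleton_preimage:
  assumes "nagata_system (fin_vietoris X) U V"
  shows "nagata_system X (\<lambda>x n. {y \<in> topspace X. {y} \<in> U {x} n}) (\<lambda>x n. {y \<in> topspace X. {y} \<in> V {x} n})"
proof -
  interpret F: nagata_system "fin_vietoris X" U V by fact
  have sing: "{x} \<in> topspace (fin_vietoris X)" if "x \<in> topspace X" for x
    using that by (simp add: topspace_fin_vietoris)
  have preimage_open: "openin X {y \<in> topspace X. {y} \<in> W}" if "openin (fin_vietoris X) W" for W
    using openin_continuous_map_preimage[OF continuous_map_singleton_fin_vietoris that] .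
  show ?thesis
  proof unfold_locales
    fix x n assume x: "x \<in> topspace X"
    show "openin X {y \<in> topspace X. {y} \<in> U {x} n} \<and> x \<in> {y \<in> topspace X. {y} \<in> U {x} n}"
      by (intro conjI preimage_open) (use F.open_U[OF sing[OF x]] x in auto)
    show "openin X {y \<in> topspace X. {y} \<in> V {x} n} \<and> x \<in> {y \<in> topspace X. {y} \<in> V {x} n}"
      by (intro conjI preimage_open) (use F.open_V[OF sing[OF x]] x in auto)
    show "{y \<in> topspace X. {y} \<in> U {x} (Suc n)} \<subseteq> {y \<in> topspace X. {y} \<in> U {x} n}"
      using F.U_Suc_subset[OF sing[OF x]] by auto
  next
    fix x W assume x: "x \<in> topspace X" and W: "openin X W" "x \<in> W"
    have "openin (fin_vietoris X) (fin_box {W})"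
      using W by (intro openin_fin_vietoris_fin_box) auto
    moreover have "{x} \<in> fin_box {W}"
      using W by (simp add: fin_box_def)
    ultimately obtain n where "U {x} n \<subseteq> fin_box {W}"
      using F.U_local_base[OF sing[OF x]] by blast
    then have "{y \<in> topspace X. {y} \<in> U {x} n} \<subseteq> W"
      unfolding fin_box_def by blast
    then show "\<exists>n. {y \<in> topspace X. {y} \<in> U {x} n} \<subseteq> W" ..
  next
    fix x y n assume x: "x \<in> topspace X" and y: "y \<in> topspace X"
      and "y \<notin> {z \<in> topspace X. {z} \<in> U {x} n}"
    then have "{y} \<notin> U {x} n" by blast
    then have "V {x} n \<inter> V {y} n = {}" by (rule F.V_disjoint[OF sing[OF x] sing[OF y]])
    then show "{z \<in> topspace X. {z} \<in> V {x} n} \<inter> {z \<in> topspace X. {z} \<in> V {y} n} = {}"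
      by auto
  qed
qed

theorem theorem4p5:
  fixes X :: "'a topology"
  assumes "regular_space X" and "Hausdorff_space X"
  shows "nagata_space X \<longleftrightarrow> nagata_space (fin_vietoris X)"
  unfolding nagata_space_iff_nagata_system
  using nagata_system.nagata_system_fin_vietoris nagata_system_singleton_preimage by blast

end
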